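(* Let $\mathbb{K}$ be a commutative semiring. Every unambiguous two-way $\mathbb{K}$-automaton is equivalent to an unambiguous one-way $\mathbb{K}$-automaton, i.e. both assign the same weight to every word of $A^*$.
   Context: With $A_{\vdash\dashv}=A\cup\{\vdash,\dashv\}$ ($\vdash,\dashv$ fresh end-markers), a two-way $\mathbb{K}$-automaton $(Q,A,E,I,T)$ has finite state set $Q$, partial functions $I,T:Q\to\mathbb{K}$ (supports: initial/final states), and a partial function $E:Q\times(A_{\vdash\dashv}\times\{-1,+1\})\times Q\to\mathbb{K}$ whose support (the transitions) contains no $(p,\vdash,-1,q)$ nor $(p,\dashv,+1,q)$; for $t=(p,a,d,q)$: $\sigma(t)=p$, $\tau(t)=q$, $\lambda(t)=a$, $\delta(t)=d$. For $w=w_1\cdots w_n\in A^*$ set $w_0=\vdash$, $w_{n+1}=\dashv$. A computation on $w$ is a sequence of configurations $((p_0,i_0),\dots,(p_k,i_k))$, $p_j\in Q$, $i_j\in[0;n+1]$, with $i_0=1$, $i_k=n+1$, $p_0$ initial, $p_k$ final, and for each $j<k$ a transition $t_j$ with $\sigma(t_j)=p_j$, $\tau(t_j)=p_{j+1}$, $\lambda(t_j)=w_{i_j}$, $i_{j+1}=i_j+\delta(t_j)$; its weight is $I(p_0)\otimes\bigotimes_{j=0}^{k-1}E(t_j)\otimes T(p_k)$. The weight of $w$ is the sum ($\oplus$) of the weights of all computations on $w$ ($0_\mathbb{K}$ if none). A one-way $\mathbb{K}$-automaton $(P,A,G,I',T')$ has partial $I',T':P\to\mathbb{K}$ and partial $G:P\times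 A\times P\to\mathbb{K}$; its computations on $w$ are paths $(q_0,w_1,q_1)\cdots(q_{n-1},w_n,q_n)$ of transitions from an initial to a final state, with weight $I'(q_0)\otimes\bigotimes_j G(q_{j-1},w_j,q_j)\otimes T'(q_n)$, and the weight of $w$ is the sum of these. An automaton (one-way or two-way) is unambiguous if every word labels at most one computation. *)

theory Defs
  imports Main
begin

datatype 'a ext = LMark | Sym 'a | RMark

datatype dir = Back | Fwd

fun dval :: "dir \<Rightarrow> int" where
  "dval Back = -1" | "dval Fwd = 1"

record ('q, 'a, 'k) twa =
  tw_states :: "'q set"
  tw_init  :: "'q \<Rightarrow> 'k option"
  tw_final :: "'q \<Rightarrow> 'k option"
  tw_trans :: "'q \<Rightarrow> 'a ext \<Rightarrow> dir \<Rightarrow> 'q \<Rightarrow> 'k option"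

definition twa_wf :: "'a set \<Rightarrow> ('q, 'a, 'k) twa \<Rightarrow> bool" where
  "twa_wf A M \<longleftrightarrow>
     finite (tw_states M) \<and> finite A \<and>
     (\<forall>p. tw_init M p \<noteq> None \<longrightarrow> p \<in> tw_states M) \<and>
     (\<forall>p. tw_final M p \<noteq> None \<longrightarrow> p \<in> tw_states M) \<and>
     (\<forall>p a d q. tw_trans M p a d q \<noteq> None \<longrightarrow>
         p \<in> tw_states M \<and> q \<in> tw_states M \<and>
         (\<forall>b. a = Sym b \<longrightarrow> b \<in> A) \<and>
         \<not> (a = LMark \<and> d = Back) \<and> \<not> (a = RMark \<and> d = Fwd))"

(* w_0 = |-, w_i = i-th letter (1-based), w_{n+1} = -| *)
definition letter_at :: "'a list \<Rightarrow> int \<Rightarrow> 'a ext" where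
  "letter_at w i = (if i \<le> 0 then LMark
                    else if i \<ge> int (length w) + 1 then RMark
                    else Sym (w ! (nat i - 1)))"

definition dir_of :: "int \<Rightarrow> int \<Rightarrow> dir" where
  "dir_of i i' = (if i' = i + 1 then Fwd else Back)"

definition tw_comps :: "('q, 'a, 'k) twa \<Rightarrow> 'a list \<Rightarrow> ('q \<times> int) list set" where
  "tw_comps M w = {cs. cs \<noteq> [] \<and>
      (\<forall>c\<in>set cs. 0 \<le> snd c \<and> snd c \<le> int (length w) + 1) \<and>
      snd (hd cs) = 1 \<and> snd (last cs) = int (length w) + 1 \<and>
      tw_init M (fst (hd cs)) \<noteq> None \<and> tw_final M (fst (last cs)) \<noteq> None \<and>
      (\<forall>j < length cs - 1. \<exists>d.
          tw_trans M (fst (cs ! j)) (letter_at w (snd (cs ! j))) d (fst (cs ! (j+1))) \<noteq> None \<and>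
          snd (cs ! (j+1)) = snd (cs ! j) + dval d)}"

definition tw_comp_weight :: "('q, 'a, 'k::comm_semiring_1) twa \<Rightarrow> 'a list \<Rightarrow> ('q \<times> int) list \<Rightarrow> 'k" where
  "tw_comp_weight M w cs =
     the (tw_init M (fst (hd cs))) *
     prod_list (map (\<lambda>j. the (tw_trans M (fst (cs ! j)) (letter_at w (snd (cs ! j)))
                              (dir_of (snd (cs ! j)) (snd (cs ! (j+1)))) (fst (cs ! (j+1)))))
                    [0..<length cs - 1]) *
     the (tw_final M (fst (last cs)))"

(* Weight of a word: sum over all computations (this finite sum is the intended one
   whenever the set of computations is finite, in particular for unambiguous automata). *)
definition tw_weight :: "('q, 'a, 'k::comm_semiring_1) twa \<Rightarrow> 'a list \<Rightarrow> 'k" where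
  "tw_weight M w = (\<Sum>cs\<in>tw_comps M w. tw_comp_weight M w cs)"

definition twa_unambiguous :: "('q, 'a, 'k) twa \<Rightarrow> bool" where
  "twa_unambiguous M \<longleftrightarrow> (\<forall>w cs cs'. cs \<in> tw_comps M w \<longrightarrow> cs' \<in> tw_comps M w \<longrightarrow> cs = cs')"

record ('q, 'a, 'k) owa =
  ow_states :: "'q set"
  ow_init  :: "'q \<Rightarrow> 'k option"
  ow_final :: "'q \<Rightarrow> 'k option"
  ow_trans :: "'q \<Rightarrow> 'a \<Rightarrow> 'q \<Rightarrow> 'k option"

definition owa_wf :: "'a set \<Rightarrow> ('q, 'a, 'k) owa \<Rightarrow> bool" where
  "owa_wf A N \<longleftrightarrow>
     finite (ow_states N) \<and>
     (\<forall>p. ow_init N p \<noteq> None \<longrightarrow> p \<in> ow_states N) \<and>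
     (\<forall>p. ow_final N p \<noteq> None \<longrightarrow> p \<in> ow_states N) \<and>
     (\<forall>p a q. ow_trans N p a q \<noteq> None \<longrightarrow> p \<in> ow_states N \<and> q \<in> ow_states N \<and> a \<in> A)"

definition ow_comps :: "('q, 'a, 'k) owa \<Rightarrow> 'a list \<Rightarrow> 'q list set" where
  "ow_comps N w = {qs. length qs = length w + 1 \<and>
      ow_init N (qs ! 0) \<noteq> None \<and> ow_final N (qs ! length w) \<noteq> None \<and>
      (\<forall>j < length w. ow_trans N (qs ! j) (w ! j) (qs ! (j+1)) \<noteq> None)}"

definition ow_comp_weight :: "('q, 'a, 'k::comm_semiring_1) owa \<Rightarrow> 'a list \<Rightarrow> 'q list \<Rightarrow> 'k" where
  "ow_comp_weight N w qs =
     the (ow_init N (qs ! 0)) *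
     prod_list (map (\<lambda>j. the (ow_trans N (qs ! j) (w ! j) (qs ! (j+1)))) [0..<length w]) *
     the (ow_final N (qs ! length w))"

definition ow_weight :: "('q, 'a, 'k::comm_semiring_1) owa \<Rightarrow> 'a list \<Rightarrow> 'k" where
  "ow_weight N w = (\<Sum>qs\<in>ow_comps N w. ow_comp_weight N w qs)"

definition owa_unambiguous :: "('q, 'a, 'k) owa \<Rightarrow> bool" where
  "owa_unambiguous N \<longleftrightarrow> (\<forall>w qs qs'. qs \<in> ow_comps N w \<longrightarrow> qs' \<in> ow_comps N w \<longrightarrow> qs = qs')"

end

theory Submission
  imports Defs
begin

text \<open>
  A computation of a two-way automaton on a word is determined by its crossing sequences: for every
  boundary between adjacent positions, the list of the steps crossing it, in order. In an
  unambiguous automaton a computation never repeats a configuration (the loop in between could be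
  pumped into a second computation), so its crossing sequences have at most \<open>2 |Q|\<close> entries.

  Conversely, every family of crossing sequences that is consistent at each position (the visits
  to the position, read off the crossing sequences of its two boundaries, chain together through
  transitions of the automaton) comes from a computation, which is rebuilt by following the
  crossing sequences. Consistency at a position involves only its letter and two consecutive
  crossing sequences, so a one-way automaton whose states carry bounded crossing sequences checks
  it letter by letter. Since the weight of a computation is the product, over all positions, of
  the weights of the steps leaving that position, the runs of this one-way automaton correspond to
  the computations of the two-way automaton, with the same weights.
\<close>

subsection \<open>Paths and crossing sequences\<close>

definition tw_step :: "('q, 'a, 'k) twa \<Rightarrow> 'a list \<Rightarrow> 'q \<times> int \<Rightarrow> 'q \<times> int \<Rightarrow> bool" where
  "tw_step M w c c' \<longleftrightarrow>
     (\<exists>d. tw_trans M (fst c) (letter_at w (snd c)) d (fst c') \<noteq> None \<and> snd c' = snd c + dval d)"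

lemma tw_comps_iff:
  "cs \<in> tw_comps M w \<longleftrightarrow> cs \<noteq> [] \<and> (\<forall>c\<in>set cs. 0 \<le> snd c \<and> snd c \<le> int (length w) + 1) \<and>
      snd (hd cs) = 1 \<and> snd (last cs) = int (length w) + 1 \<and>
      tw_init M (fst (hd cs)) \<noteq> None \<and> tw_final M (fst (last cs)) \<noteq> None \<and>
      successively (tw_step M w) cs"
  by (auto simp: tw_comps_def successively_conv_nth tw_step_def less_diff_conv)

lemma tw_step_unit: "tw_step M w c c' \<Longrightarrow> \<bar>snd c' - snd c\<bar> = 1"
  unfolding tw_step_def by (metis add_diff_cancel_left' dir.exhaust dval.simps abs_minus_cancel abs_one)

abbreviation unit_steps :: "('q \<times> int) list \<Rightarrow> bool" where
  "unit_steps \<equiv> successively (\<lambda>c c'. \<bar>snd c' - snd c\<bar> = 1)"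

lemma tw_path_unit_steps: "successively (tw_step M w) cs \<Longrightarrow> unit_steps cs"
  by (erule successively_mono) (rule tw_step_unit)

lemma first_reach:
  fixes h :: "'c \<Rightarrow> int"
  assumes steps: "successively (\<lambda>x y. \<bar>h y - h x\<bar> = 1) xs"
    and start: "h (hd xs) < i" and reach: "\<exists>x\<in>set xs. i \<le> h x"
  obtains pre suf where "xs = pre @ suf" "pre \<noteq> []" "suf \<noteq> []" "\<forall>x\<in>set pre. h x < i"
    "h (last pre) = i - 1" "h (hd suf) = i"
proof -
  define pre where "pre = takeWhile (\<lambda>x. h x < i) xs"
  define suf where "suf = dropWhile (\<lambda>x. h x < i) xs"
  have xs: "xs = pre @ suf" by (simp add: pre_def suf_def)
  have "xs \<noteq> []" using reach by auto
  then have pre: "pre \<noteq> []" using start by (cases xs) (auto simp: pre_def)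
  have suf: "suf \<noteq> []" using reach by (force simp: suf_def)
  have below: "\<forall>x\<in>set pre. h x < i" by (auto simp: pre_def dest: set_takeWhileD)
  have "i \<le> h (hd suf)" using suf hd_dropWhile[of "\<lambda>x. h x < i" xs] by (simp add: suf_def)
  moreover have "\<bar>h (hd suf) - h (last pre)\<bar> = 1"
    using steps pre suf by (simp add: xs successively_append_iff)
  moreover have "h (last pre) < i" using below pre by simp
  ultimately have "h (last pre) = i - 1" "h (hd suf) = i" by linarith+
  with that xs pre suf below show thesis by blast
qed

lemma first_reach_up:
  assumes "unit_steps cs" "snd (hd cs) < i" "\<exists>x\<in>set cs. i \<le> snd x"
  obtains pre suf where "cs = pre @ suf" "pre \<noteq> []" "suf \<noteq> []" "\<forall>x\<in>set pre. snd x < i"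
    "snd (last pre) = i - 1" "snd (hd suf) = i"
  using first_reach[of snd cs i] assms by blast

lemma first_reach_down:
  assumes "unit_steps cs" "i < snd (hd cs)" "\<exists>x\<in>set cs. snd x \<le> i"
  obtains pre suf where "cs = pre @ suf" "pre \<noteq> []" "suf \<noteq> []" "\<forall>x\<in>set pre. i < snd x"
    "snd (last pre) = i + 1" "snd (hd suf) = i"
proof -
  have "successively (\<lambda>x y. \<bar>- snd y - - snd x\<bar> = 1) cs"
    using assms(1) by (simp add: abs_minus_commute)
  moreover have "- snd (hd cs) < - i" "\<exists>x\<in>set cs. - i \<le> - snd x" using assms(2,3) by auto
  ultimately obtain pre suf where "cs = pre @ suf" "pre \<noteq> []" "suf \<noteq> []" "\<forall>x\<in>set pre. - snd x < - i"
      "- snd (last pre) = - i - 1" "- snd (hd suf) = - i"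
    by (rule first_reach)
  then show thesis using that by auto
qed

lemma unit_steps_intermediate:
  assumes "unit_steps cs" "snd (hd cs) < i" "\<exists>x\<in>set cs. i \<le> snd x"
  shows "\<exists>x\<in>set cs. snd x = i"
proof -
  obtain pre suf where "cs = pre @ suf" "suf \<noteq> []" "snd (hd suf) = i"
    using first_reach_up[OF assms] by blast
  then show ?thesis by (metis Un_iff hd_in_set set_append)
qed

lemma first_return:
  assumes "unit_steps (c # cs)" "\<exists>x\<in>set cs. snd x = snd c"
  obtains pre suf where "cs = pre @ suf" "pre \<noteq> []" "suf \<noteq> []" "\<forall>x\<in>set pre. snd x \<noteq> snd c"
    "snd (last pre) = snd (hd pre)" "snd (hd suf) = snd c"
proof -
  have steps: "unit_steps cs" and first: "\<bar>snd (hd cs) - snd c\<bar> = 1"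
    using assms by (auto simp: successively_Cons)
  show thesis
  proof (cases "snd (hd cs) < snd c")
    case True
    then obtain pre suf where ps: "cs = pre @ suf" "pre \<noteq> []" "suf \<noteq> []" "\<forall>x\<in>set pre. snd x < snd c"
        "snd (last pre) = snd c - 1" "snd (hd suf) = snd c"
      using first_reach_up[OF steps] assms(2) by (metis order.refl)
    moreover have "snd (hd pre) = snd c - 1" using ps(1,2) True first by simp
    ultimately show thesis using that by fastforce
  next
    case False
    then have "snd c < snd (hd cs)" using first by linarith
    then obtain pre suf where ps: "cs = pre @ suf" "pre \<noteq> []" "suf \<noteq> []" "\<forall>x\<in>set pre. snd c < snd x"
        "snd (last pre) = snd c + 1" "snd (hd suf) = snd c"
      using first_reach_down[OF steps] assms(2) by (metis order.refl)
    moreover have "snd (hd pre) = snd c + 1" using ps(1,2) False first by simp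
    ultimately show thesis using that by fastforce
  qed
qed

text \<open>
  Boundary \<open>b\<close> separates positions \<open>b\<close> and \<open>b + 1\<close>; a step crossing it is recorded as
  its source state, target state and direction.
\<close>

type_synonym 'q crossing = "('q \<times> 'q \<times> dir) list"

definition crossing_step :: "'q \<times> int \<Rightarrow> 'q \<times> int \<Rightarrow> int \<Rightarrow> 'q crossing" where
  "crossing_step c c' b =
     (if min (snd c) (snd c') = b then [(fst c, fst c', dir_of (snd c) (snd c'))] else [])"

fun crossing_seq :: "('q \<times> int) list \<Rightarrow> int \<Rightarrow> 'q crossing" where
  "crossing_seq (c # c' # cs) b = crossing_step c c' b @ crossing_seq (c' # cs) b"
| "crossing_seq _ b = []"

lemma crossing_seq_Cons:
  "crossing_seq (c # cs) b = (if cs = [] then [] else crossing_step c (hd cs) b @ crossing_seq cs b)"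
  by (cases cs) auto

lemma crossing_seq_append:
  "crossing_seq (xs @ ys) b =
     crossing_seq xs b @ (if xs = [] \<or> ys = [] then [] else crossing_step (last xs) (hd ys) b) @
     crossing_seq ys b"
  by (induction xs) (auto simp: crossing_seq_Cons)

lemma crossing_step_unit:
  "\<bar>snd c' - snd c\<bar> = 1 \<Longrightarrow> crossing_step c c' b =
     (if snd c = b \<and> snd c' = b + 1 then [(fst c, fst c', Fwd)]
      else if snd c = b + 1 \<and> snd c' = b then [(fst c, fst c', Back)] else [])"
  by (auto simp: crossing_step_def dir_of_def)

lemma crossing_seq_eq_Nil:
  assumes "unit_steps cs"
    and "(\<forall>c\<in>set cs. snd c \<noteq> b) \<or> (\<forall>c\<in>set cs. snd c \<noteq> b + 1)"
  shows "crossing_seq cs b = []"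
  using assms by (induction cs b rule: crossing_seq.induct) (auto simp: crossing_step_unit)

lemma crossing_seq_append_avoiding:
  assumes "unit_steps (pre @ suf)"
    and "pre \<noteq> []" "suf \<noteq> []" "\<forall>c\<in>set pre. snd c \<noteq> i" "b = i - 1 \<or> b = i"
  shows "crossing_seq (pre @ suf) b = crossing_step (last pre) (hd suf) b @ crossing_seq suf b"
proof -
  have "crossing_seq pre b = []"
    using assms by (intro crossing_seq_eq_Nil) (auto simp: successively_append_iff)
  then show ?thesis using assms(2,3) by (simp add: crossing_seq_append)
qed

subsection \<open>Local consistency at a position\<close>

text \<open>
  \<open>visits M a ends pe s L R\<close>: the successive visits of a computation to a position labelled \<open>a\<close>,
  the first of which begins in state \<open>s\<close>, are described by the crossing sequences \<open>L\<close> and \<open>R\<close>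
  of the boundaries to its left and right. Each visit either leaves through a boundary and comes
  back through the same one, or leaves for good to the right, or (if \<open>ends\<close>) halts in \<open>pe\<close>.
\<close>

inductive visits ::
  "('q, 'a, 'k) twa \<Rightarrow> 'a ext \<Rightarrow> bool \<Rightarrow> 'q \<Rightarrow> 'q \<Rightarrow> 'q crossing \<Rightarrow> 'q crossing \<Rightarrow> bool"
  for M a ends pe where
  stop: "ends \<Longrightarrow> visits M a ends pe pe [] []"
| back_return: "tw_trans M s a Back q \<noteq> None \<Longrightarrow> visits M a ends pe s' L R \<Longrightarrow>
    visits M a ends pe s ((s, q, Back) # (q', s', Fwd) # L) R"
| fwd_leave: "tw_trans M s a Fwd q \<noteq> None \<Longrightarrow> visits M a ends pe s [] [(s, q, Fwd)]"
| fwd_return: "tw_trans M s a Fwd q \<noteq> None \<Longrightarrow> visits M a ends pe s' L R \<Longrightarrow>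
    visits M a ends pe s L ((s, q, Fwd) # (q', s', Back) # R)"

text \<open>The remaining visits to the position begin with an entry from the left (right) neighbour.\<close>

definition waiting_left ::
  "('q, 'a, 'k) twa \<Rightarrow> 'a ext \<Rightarrow> bool \<Rightarrow> 'q \<Rightarrow> 'q crossing \<Rightarrow> 'q crossing \<Rightarrow> bool" where
  "waiting_left M a ends pe L R \<longleftrightarrow>
     L = [] \<and> R = [] \<or> (\<exists>q s L'. L = (q, s, Fwd) # L' \<and> visits M a ends pe s L' R)"

definition waiting_right ::
  "('q, 'a, 'k) twa \<Rightarrow> 'a ext \<Rightarrow> bool \<Rightarrow> 'q \<Rightarrow> 'q crossing \<Rightarrow> 'q crossing \<Rightarrow> bool" where
  "waiting_right M a ends pe L R \<longleftrightarrow>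
     L = [] \<and> R = [] \<or> (\<exists>q s R'. R = (q, s, Back) # R' \<and> visits M a ends pe s L R')"

lemma visits_cases:
  assumes "visits M a ends pe s L R"
  obtains (finish) "ends" "s = pe" "L = []" "R = []"
  | (move_back) q L' where "tw_trans M s a Back q \<noteq> None" "L = (s, q, Back) # L'" "waiting_left M a ends pe L' R"
  | (move_fwd) q R' where "tw_trans M s a Fwd q \<noteq> None" "R = (s, q, Fwd) # R'" "waiting_right M a ends pe L R'"
  using assms by cases (auto simp: waiting_left_def waiting_right_def)

lemma visits_of_path:
  assumes "successively (tw_step M w) cs" "cs \<noteq> []" "hd cs = (s, i)" "last cs = (pe, e)" "i \<le> e"
  shows "visits M (letter_at w i) (i = e) pe s (crossing_seq cs (i - 1)) (crossing_seq cs i)"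
  using assms
proof (induction "length cs" arbitrary: cs s rule: less_induct)
  case less
  obtain cs' where cs: "cs = (s, i) # cs'" using less.prems(2,3) by (cases cs) auto
  show ?case
  proof (cases cs')
    case Nil
    with cs less.prems(4) show ?thesis by (auto intro: stop)
  next
    case (Cons c' cs'')
    have path': "successively (tw_step M w) cs'" and "tw_step M w (s, i) c'"
      using less.prems(1) by (simp_all add: cs Cons)
    then obtain d where d: "tw_trans M s (letter_at w i) d (fst c') \<noteq> None" "snd c' = i + dval d"
      by (auto simp: tw_step_def)
    have unit: "unit_steps cs" and unit': "unit_steps cs'"
      using tw_path_unit_steps less.prems(1) path' by blast+
    have last': "last cs' = (pe, e)" using less.prems(4) by (simp add: cs Cons)
    show ?thesis
    proof (cases "\<exists>x\<in>set cs'. snd x = i")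
      case True
      then obtain pre suf where ps: "cs' = pre @ suf" "pre \<noteq> []" "suf \<noteq> []" "\<forall>x\<in>set pre. snd x \<noteq> i"
          "snd (last pre) = snd (hd pre)" "snd (hd suf) = i"
        using first_return[of "(s, i)" cs'] unit by (auto simp: cs)
      have hd_pre: "hd pre = c'" using ps(1,2) Cons by (cases pre) auto
      have IH: "visits M (letter_at w i) (i = e) pe (fst (hd suf)) (crossing_seq suf (i - 1)) (crossing_seq suf i)"
        using ps path' last' less.prems(5)
        by (intro less.hyps) (auto simp: cs successively_append_iff prod_eq_iff)
      have split: "crossing_seq cs b =
          crossing_step (s, i) c' b @ crossing_step (last pre) (hd suf) b @ crossing_seq suf b"
        if "b = i - 1 \<or> b = i" for b
        using crossing_seq_append_avoiding[of pre suf i b] unit' ps that hd_pre by (simp add: cs crossing_seq_Cons)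
      show ?thesis
      proof (cases d)
        case Back
        with d ps(5,6) hd_pre show ?thesis
          using back_return[OF d(1)[unfolded Back] IH] by (simp add: split crossing_step_unit)
      next
        case Fwd
        with d ps(5,6) hd_pre show ?thesis
          using fwd_return[OF d(1)[unfolded Fwd] IH] by (simp add: split crossing_step_unit)
      qed
    next
      case False
      have "d = Fwd"
      proof (rule ccontr)
        assume "d \<noteq> Fwd"
        then have "snd (hd cs') < i" using d Cons by (cases d) auto
        moreover have "\<exists>x\<in>set cs'. i \<le> snd x"
          using last' less.prems(5) Cons by (metis last_in_set list.distinct(1) snd_conv)
        ultimately show False using unit_steps_intermediate[OF unit'] False by blast
      qed
      moreover have "crossing_seq cs' b = []" if "b = i - 1 \<or> b = i" for b
        using unit' that False by (intro crossing_seq_eq_Nil) auto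
      ultimately show ?thesis using d by (auto simp: cs Cons crossing_seq_Cons crossing_step_unit intro: fwd_leave)
    qed
  qed
qed

lemma waiting_left_of_path:
  assumes path: "successively (tw_step M w) cs" and "cs \<noteq> []" "snd (hd cs) < j" "last cs = (pe, e)" "j \<le> e"
  shows "waiting_left M (letter_at w j) (j = e) pe (crossing_seq cs (j - 1)) (crossing_seq cs j)"
proof -
  have "\<exists>x\<in>set cs. j \<le> snd x" using assms(2,4,5) by (metis last_in_set snd_conv)
  then obtain pre suf where ps: "cs = pre @ suf" "pre \<noteq> []" "suf \<noteq> []" "\<forall>x\<in>set pre. snd x < j"
      "snd (last pre) = j - 1" "snd (hd suf) = j"
    using first_reach_up[OF tw_path_unit_steps[OF path] assms(3)] by blast
  have "crossing_seq cs b = crossing_step (last pre) (hd suf) b @ crossing_seq suf b" if "b = j - 1 \<or> b = j" for b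
    using crossing_seq_append_avoiding[of pre suf j b] tw_path_unit_steps[OF path] ps that by fastforce
  moreover have "visits M (letter_at w j) (j = e) pe (fst (hd suf)) (crossing_seq suf (j - 1)) (crossing_seq suf j)"
    using path ps assms(4,5) by (intro visits_of_path) (auto simp: successively_append_iff prod_eq_iff)
  ultimately show ?thesis using ps(5,6) by (auto simp: waiting_left_def crossing_step_unit)
qed

lemma waiting_right_of_path:
  assumes path: "successively (tw_step M w) cs" and "cs \<noteq> []" "j < snd (hd cs)" "last cs = (pe, e)" "j \<le> e"
  shows "waiting_right M (letter_at w j) (j = e) pe (crossing_seq cs (j - 1)) (crossing_seq cs j)"
proof (cases "\<exists>x\<in>set cs. snd x \<le> j")
  case True
  then obtain pre suf where ps: "cs = pre @ suf" "pre \<noteq> []" "suf \<noteq> []" "\<forall>x\<in>set pre. j < snd x"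
      "snd (last pre) = j + 1" "snd (hd suf) = j"
    using first_reach_down[OF tw_path_unit_steps[OF path] assms(3)] by blast
  have "crossing_seq cs b = crossing_step (last pre) (hd suf) b @ crossing_seq suf b" if "b = j - 1 \<or> b = j" for b
    using crossing_seq_append_avoiding[of pre suf j b] tw_path_unit_steps[OF path] ps that by fastforce
  moreover have "visits M (letter_at w j) (j = e) pe (fst (hd suf)) (crossing_seq suf (j - 1)) (crossing_seq suf j)"
    using path ps assms(4,5) by (intro visits_of_path) (auto simp: successively_append_iff prod_eq_iff)
  ultimately show ?thesis using ps(5,6) by (auto simp: waiting_right_def crossing_step_unit)
next
  case False
  then have "crossing_seq cs b = []" if "b = j - 1 \<or> b = j" for b
    using tw_path_unit_steps[OF path] that by (intro crossing_seq_eq_Nil) auto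
  then show ?thesis by (simp add: waiting_right_def)
qed

subsection \<open>Rebuilding a computation from its crossing sequences\<close>

text \<open>
  The computation has reached configuration \<open>(s, i)\<close> and \<open>X\<close> holds the parts of the crossing
  sequences not yet traversed; every position left (right) of \<open>i\<close> waits for an entry from the
  right (left).
\<close>

definition resumable :: "('q, 'a, 'k) twa \<Rightarrow> 'a list \<Rightarrow> 'q \<Rightarrow> 'q \<Rightarrow> int \<Rightarrow> (int \<Rightarrow> 'q crossing) \<Rightarrow> bool" where
  "resumable M w pe s i X \<longleftrightarrow> (let N = int (length w) + 1 in
     0 \<le> i \<and> i \<le> N \<and>
     visits M (letter_at w i) (i = N) pe s (X (i - 1)) (X i) \<and>
     (\<forall>j\<in>{0..<i}. waiting_right M (letter_at w j) (j = N) pe (X (j - 1)) (X j)) \<and>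
     (\<forall>j\<in>{i<..N}. waiting_left M (letter_at w j) (j = N) pe (X (j - 1)) (X j)) \<and>
     (\<forall>b. b < 0 \<or> int (length w) < b \<longrightarrow> X b = []))"

lemma resumableD:
  assumes "resumable M w pe s i X"
  shows "0 \<le> i" "i \<le> int (length w) + 1"
    and "visits M (letter_at w i) (i = int (length w) + 1) pe s (X (i - 1)) (X i)"
    and "\<And>j. 0 \<le> j \<Longrightarrow> j < i \<Longrightarrow>
           waiting_right M (letter_at w j) (j = int (length w) + 1) pe (X (j - 1)) (X j)"
    and "\<And>j. i < j \<Longrightarrow> j \<le> int (length w) + 1 \<Longrightarrow>
           waiting_left M (letter_at w j) (j = int (length w) + 1) pe (X (j - 1)) (X j)"
    and "\<And>b. b < 0 \<or> int (length w) < b \<Longrightarrow> X b = []"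
  using assms by (auto simp: resumable_def Let_def)

lemma resumable_crossing_seq:
  assumes "cs \<in> tw_comps M w"
  shows "resumable M w (fst (last cs)) (fst (hd cs)) 1 (crossing_seq cs)"
proof -
  let ?N = "int (length w) + 1"
  note C = assms[unfolded tw_comps_iff]
  have hd: "hd cs = (fst (hd cs), 1)" and last: "last cs = (fst (last cs), ?N)"
    using C by (simp_all add: prod_eq_iff)
  have "crossing_seq cs b = []" if "b < 0 \<or> int (length w) < b" for b
    using tw_path_unit_steps C that by (intro crossing_seq_eq_Nil) force+
  then show ?thesis
    using visits_of_path[OF _ _ hd last] waiting_right_of_path[OF _ _ _ last] waiting_left_of_path[OF _ _ _ last] C
    by (auto simp: resumable_def Let_def)
qed

lemma resumable_Back:
  assumes res: "resumable M w pe s i X" and X: "X (i - 1) = (s, q, Back) # L"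
    and waits: "waiting_left M (letter_at w i) (i = int (length w) + 1) pe L (X i)"
  shows "resumable M w pe q (i - 1) (X(i - 1 := L))"
proof -
  let ?N = "int (length w) + 1"
  note inv = resumableD[OF res]
  have range: "0 \<le> i - 1" "i - 1 \<le> int (length w)"
    using inv(6)[of "i - 1"] X by force+
  then have "waiting_right M (letter_at w (i - 1)) (i - 1 = ?N) pe (X (i - 1 - 1)) (X (i - 1))"
    using inv(4)[of "i - 1"] range by simp
  then have "visits M (letter_at w (i - 1)) (i - 1 = ?N) pe q (X (i - 1 - 1)) L"
    using X by (auto simp: waiting_right_def)
  then show ?thesis
    unfolding resumable_def Let_def
  proof (intro conjI ballI allI impI)
    fix j assume "j \<in> {i - 1<..?N}"
    then show "waiting_left M (letter_at w j) (j = ?N) pe ((X(i - 1 := L)) (j - 1)) ((X(i - 1 := L)) j)"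
      using inv(5)[of j] waits by (cases "j = i") auto
  qed (use inv(4,6) range in auto)
qed

lemma resumable_Fwd:
  assumes res: "resumable M w pe s i X" and X: "X i = (s, q, Fwd) # R"
    and waits: "waiting_right M (letter_at w i) (i = int (length w) + 1) pe (X (i - 1)) R"
  shows "resumable M w pe q (i + 1) (X(i := R))"
proof -
  let ?N = "int (length w) + 1"
  note inv = resumableD[OF res]
  have range: "0 \<le> i" "i \<le> int (length w)"
    using inv(6)[of i] X by force+
  then have "waiting_left M (letter_at w (i + 1)) (i + 1 = ?N) pe (X i) (X (i + 1))"
    using inv(5)[of "i + 1"] range by simp
  then have "visits M (letter_at w (i + 1)) (i + 1 = ?N) pe q R (X (i + 1))"
    using X by (auto simp: waiting_left_def)
  then show ?thesis
    unfolding resumable_def Let_def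
  proof (intro conjI ballI allI impI)
    fix j assume "j \<in> {0..<i + 1}"
    then show "waiting_right M (letter_at w j) (j = ?N) pe ((X(i := R)) (j - 1)) ((X(i := R)) j)"
      using inv(4)[of j] waits by (cases "j = i") auto
  qed (use inv(5,6) range in auto)
qed

lemma resumable_final:
  assumes res: "resumable M w pe s (int (length w) + 1) X" and last: "X (int (length w)) = []"
  shows "X b = []"
proof -
  note inv = resumableD[OF res]
  have "X (int (length w) - int k) = []" if "k \<le> length w" for k
    using that
  proof (induction k)
    case 0
    then show ?case using last by simp
  next
    case (Suc k)
    let ?j = "int (length w) - int k"
    have "waiting_right M (letter_at w ?j) (?j = int (length w) + 1) pe (X (?j - 1)) (X ?j)"
      using inv(4)[of ?j] Suc.prems by simp
    then show ?case using Suc by (auto simp: waiting_right_def algebra_simps)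
  qed
  from this[of "nat (int (length w) - b)"] inv(6)[of b] show ?thesis
    by (cases "0 \<le> b \<and> b \<le> int (length w)") auto
qed

lemma sum_length_fun_upd_less:
  "finite S \<Longrightarrow> b \<in> S \<Longrightarrow> X b = x # L \<Longrightarrow>
     (\<Sum>b'\<in>S. length ((X(b := L)) b')) < (\<Sum>b'\<in>S. length (X b'))"
  by (rule sum_strict_mono_ex1) auto

lemma path_of_resumable:
  assumes "resumable M w pe s i X"
  shows "\<exists>cs. cs \<noteq> [] \<and> hd cs = (s, i) \<and> last cs = (pe, int (length w) + 1) \<and>
           successively (tw_step M w) cs \<and> (\<forall>c\<in>set cs. 0 \<le> snd c \<and> snd c \<le> int (length w) + 1) \<and>
           crossing_seq cs = X"
  using assms
proof (induction "\<Sum>b\<in>{0..int (length w)}. length (X b)" arbitrary: s i X rule: less_induct)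
  case less
  let ?N = "int (length w) + 1"
  note inv = resumableD[OF less.prems]
  have extend: ?case
    if step: "tw_trans M s (letter_at w i) d q \<noteq> None" and X: "X b = (s, q, d) # L"
      and b: "b = min i (i + dval d)" and rest: "resumable M w pe q (i + dval d) (X(b := L))"
    for d q b L
  proof -
    have "0 \<le> b" "b \<le> int (length w)" using inv(6)[of b] X by force+
    then have "(\<Sum>b'\<in>{0..int (length w)}. length ((X(b := L)) b')) < (\<Sum>b'\<in>{0..int (length w)}. length (X b'))"
      using X by (intro sum_length_fun_upd_less) auto
    then obtain cs where cs: "cs \<noteq> []" "hd cs = (q, i + dval d)" "last cs = (pe, ?N)"
        "successively (tw_step M w) cs" "\<forall>c\<in>set cs. 0 \<le> snd c \<and> snd c \<le> ?N" "crossing_seq cs = X(b := L)"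
      using less.hyps rest by blast
    have "crossing_seq ((s, i) # cs) b' = X b'" for b'
      using cs(1,2,6) X b by (cases d) (auto simp: crossing_seq_Cons crossing_step_unit)
    moreover have "tw_step M w (s, i) (hd cs)" using step cs(2) by (auto simp: tw_step_def)
    ultimately show ?thesis using cs inv(1,2)
      by (intro exI[of _ "(s, i) # cs"]) (auto simp: successively_Cons)
  qed
  from inv(3) show ?case
  proof (cases rule: visits_cases)
    case finish
    then have "X = (\<lambda>_. [])" using resumable_final[of M w pe s X] less.prems by auto
    then show ?thesis using finish by (intro exI[of _ "[(pe, ?N)]"]) auto
  next
    case (move_back q L)
    then show ?thesis using resumable_Back[OF less.prems] by (intro extend[of Back q]) auto
  next
    case (move_fwd q R)
    then show ?thesis using resumable_Fwd[OF less.prems] by (intro extend[of Fwd q]) auto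
  qed
qed

lemma tw_comp_of_resumable:
  assumes "resumable M w pe p0 1 X" "tw_init M p0 \<noteq> None" "tw_final M pe \<noteq> None"
  obtains cs where "cs \<in> tw_comps M w" "fst (hd cs) = p0" "fst (last cs) = pe" "crossing_seq cs = X"
  using path_of_resumable[OF assms(1)] assms(2,3) that by (force simp: tw_comps_iff)

fun prod_pairs :: "('c \<Rightarrow> 'c \<Rightarrow> 'k::comm_monoid_mult) \<Rightarrow> 'c list \<Rightarrow> 'k" where
  "prod_pairs f (c # c' # cs) = f c c' * prod_pairs f (c' # cs)"
| "prod_pairs f _ = 1"

lemma prod_list_map_nth_pairs:
  "prod_list (map (\<lambda>j. f (cs ! j) (cs ! (j + 1))) [0..<length cs - 1]) = prod_pairs f cs"
proof (induction f cs rule: prod_pairs.induct)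
  case (1 f c c' cs)
  have "[0..<length (c # c' # cs) - 1] = 0 # map Suc [0..<length (c' # cs) - 1]"
    by (simp add: upt_conv_Cons map_Suc_upt del: upt_Suc)
  then show ?case using 1 by (simp add: comp_def)
qed auto

definition step_weight :: "('q, 'a, 'k::comm_semiring_1) twa \<Rightarrow> 'a list \<Rightarrow> 'q \<times> int \<Rightarrow> 'q \<times> int \<Rightarrow> 'k" where
  "step_weight M w c c' = the (tw_trans M (fst c) (letter_at w (snd c)) (dir_of (snd c) (snd c')) (fst c'))"

lemma tw_comp_weight_prod_pairs:
  "tw_comp_weight M w cs =
     the (tw_init M (fst (hd cs))) * prod_pairs (step_weight M w) cs * the (tw_final M (fst (last cs)))"
  by (simp add: tw_comp_weight_def step_weight_def flip: prod_list_map_nth_pairs)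

definition position_weight ::
  "('q, 'a, 'k::comm_semiring_1) twa \<Rightarrow> 'a ext \<Rightarrow> 'q crossing \<Rightarrow> 'q crossing \<Rightarrow> 'k" where
  "position_weight M a L R =
     prod_list (map (\<lambda>(p, q, d). the (tw_trans M p a d q)) (filter (\<lambda>t. snd (snd t) = Back) L)) *
     prod_list (map (\<lambda>(p, q, d). the (tw_trans M p a d q)) (filter (\<lambda>t. snd (snd t) = Fwd) R))"

lemma position_weight_append:
  "position_weight M a (L1 @ L2) (R1 @ R2) = position_weight M a L1 R1 * position_weight M a L2 R2"
  by (simp add: position_weight_def mult_ac)

lemma position_weight_Nil [simp]: "position_weight M a [] [] = 1"
  by (simp add: position_weight_def)

lemma position_weight_crossing_step:
  "\<bar>snd c' - snd c\<bar> = 1 \<Longrightarrow>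
     position_weight M (letter_at w i) (crossing_step c c' (i - 1)) (crossing_step c c' i) =
     (if i = snd c then step_weight M w c c' else 1)"
  by (auto simp: position_weight_def crossing_step_unit step_weight_def dir_of_def)

lemma prod_pairs_step_weight:
  assumes "unit_steps cs" "\<forall>c\<in>set cs. 0 \<le> snd c \<and> snd c \<le> int m"
  shows "prod_pairs (step_weight M w) cs =
           (\<Prod>i\<le>m. position_weight M (letter_at w (int i)) (crossing_seq cs (int i - 1)) (crossing_seq cs (int i)))"
  using assms
proof (induction "step_weight M w" cs rule: prod_pairs.induct)
  case (1 c c' cs)
  let ?pw = "\<lambda>cs i. position_weight M (letter_at w (int i)) (crossing_seq cs (int i - 1)) (crossing_seq cs (int i))"
  have unit: "\<bar>snd c' - snd c\<bar> = 1" and c: "snd c = int (nat (snd c))" "nat (snd c) \<le> m"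
    using "1.prems" by auto
  have "(\<Prod>i\<le>m. ?pw (c # c' # cs) i) =
      (\<Prod>i\<le>m. (if i = nat (snd c) then step_weight M w c c' else 1) * ?pw (c' # cs) i)"
  proof (rule prod.cong)
    fix i
    have "(int i = snd c) = (i = nat (snd c))" using c by auto
    then show "?pw (c # c' # cs) i = (if i = nat (snd c) then step_weight M w c c' else 1) * ?pw (c' # cs) i"
      using position_weight_crossing_step[OF unit, of M w "int i"] by (simp add: position_weight_append)
  qed simp
  also have "\<dots> = step_weight M w c c' * (\<Prod>i\<le>m. ?pw (c' # cs) i)"
    using c by (simp add: prod.distrib prod.delta)
  finally show ?case using 1 by simp
qed simp_all

lemma tw_comp_weight_crossing_seq:
  assumes "cs \<in> tw_comps M w"
  shows "tw_comp_weight M w cs =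
           the (tw_init M (fst (hd cs))) *
           (\<Prod>i\<le>Suc (length w).
              position_weight M (letter_at w (int i)) (crossing_seq cs (int i - 1)) (crossing_seq cs (int i))) *
           the (tw_final M (fst (last cs)))"
proof -
  have "prod_pairs (step_weight M w) cs =
          (\<Prod>i\<le>Suc (length w).
             position_weight M (letter_at w (int i)) (crossing_seq cs (int i - 1)) (crossing_seq cs (int i)))"
    using assms tw_path_unit_steps by (intro prod_pairs_step_weight) (auto simp: tw_comps_iff)
  then show ?thesis by (simp only: tw_comp_weight_prod_pairs)
qed

subsection \<open>Crossing sequences of an unambiguous automaton are short\<close>

lemma successively_append_Cons_iff:
  "successively P (xs @ y # ys) \<longleftrightarrow> successively P (xs @ [y]) \<and> successively P (y # ys)"
  by (auto simp: successively_append_iff successively_Cons)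

lemma tw_comps_distinct:
  assumes unamb: "twa_unambiguous M" and cs: "cs \<in> tw_comps M w"
  shows "distinct cs"
proof (rule ccontr)
  assume "\<not> distinct cs"
  then obtain xs ys zs y where split: "cs = xs @ y # ys @ y # zs"
    using not_distinct_decomp[of cs] by auto
  let ?pumped = "xs @ y # ys @ y # ys @ y # zs"
  note C = cs[unfolded tw_comps_iff]
  let ?P = "successively (tw_step M w)"
  have "?P (xs @ y # ys @ y # zs)" using C split by simp
  then have "?P (xs @ [y])" "?P ((y # ys) @ [y])" "?P (y # zs)"
    using successively_append_Cons_iff[of _ xs y "ys @ y # zs"]
      successively_append_Cons_iff[of _ "y # ys" y zs] by simp_all
  then have "?P ?pumped"
    using successively_append_Cons_iff[of _ xs y "ys @ y # ys @ y # zs"]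
      successively_append_Cons_iff[of _ "y # ys" y "ys @ y # zs"]
      successively_append_Cons_iff[of _ "y # ys" y zs] by simp
  then have "?pumped \<in> tw_comps M w"
    using C by (auto simp: tw_comps_iff split hd_append)
  then have "?pumped = cs" using unamb cs by (auto simp: twa_unambiguous_def)
  then show False by (simp add: split)
qed

lemma length_crossing_seq_le:
  "unit_steps cs \<Longrightarrow> length (crossing_seq cs b) \<le> length (filter (\<lambda>c. snd c = b \<or> snd c = b + 1) cs)"
  by (induction cs b rule: crossing_seq.induct) (auto simp: crossing_step_unit)

lemma tw_comps_states:
  assumes wf: "twa_wf A M" and cs: "cs \<in> tw_comps M w" and c: "c \<in> set cs"
  shows "fst c \<in> tw_states M"
proof -
  note C = cs[unfolded tw_comps_iff]
  obtain j where j: "j < length cs" "c = cs ! j" using c by (auto simp: in_set_conv_nth)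
  show ?thesis
  proof (cases j)
    case 0
    then show ?thesis using C j wf by (auto simp: twa_wf_def hd_conv_nth)
  next
    case (Suc k)
    then have "tw_step M w (cs ! k) c" using C j by (auto simp: successively_conv_nth)
    then show ?thesis using wf unfolding tw_step_def twa_wf_def by blast
  qed
qed

lemma crossing_seq_states:
  "twa_wf A M \<Longrightarrow> successively (tw_step M w) cs \<Longrightarrow>
     set (crossing_seq cs b) \<subseteq> tw_states M \<times> tw_states M \<times> UNIV"
proof (induction cs b rule: crossing_seq.induct)
  case (1 c c' cs b)
  then obtain d where "tw_trans M (fst c) (letter_at w (snd c)) d (fst c') \<noteq> None"
    by (auto simp: tw_step_def)
  then have "fst c \<in> tw_states M" "fst c' \<in> tw_states M"
    using "1.prems"(1) unfolding twa_wf_def by blast+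
  with 1 show ?case by (auto simp: crossing_step_def)
qed simp_all

lemma length_crossing_seq_bound:
  assumes unamb: "twa_unambiguous M" and wf: "twa_wf A M" and cs: "cs \<in> tw_comps M w"
  shows "length (crossing_seq cs b) \<le> 2 * card (tw_states M)"
proof -
  let ?at_b = "filter (\<lambda>c. snd c = b \<or> snd c = b + 1) cs"
  have "length (crossing_seq cs b) \<le> length ?at_b"
    using cs tw_path_unit_steps length_crossing_seq_le unfolding tw_comps_iff by blast
  also have "\<dots> = card (set ?at_b)"
    using tw_comps_distinct[OF unamb cs] by (simp add: distinct_card del: set_filter)
  also have "\<dots> \<le> card (tw_states M \<times> {b, b + 1})"
    using tw_comps_states[OF wf cs] wf by (intro card_mono) (auto simp: twa_wf_def)
  also have "\<dots> = 2 * card (tw_states M)" by (simp add: card_cartesian_product)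
  finally show ?thesis .
qed

subsection \<open>The one-way automaton of crossing sequences\<close>

lemma letter_at_0 [simp]: "letter_at w 0 = LMark"
  by (simp add: letter_at_def)

lemma letter_at_RMark [simp]: "int (length w) < i \<Longrightarrow> letter_at w i = RMark"
  by (simp add: letter_at_def)

lemma letter_at_Suc: "j < length w \<Longrightarrow> letter_at w (1 + int j) = Sym (w ! j)"
  by (simp add: letter_at_def nat_add_distrib)

definition position_consistent ::
  "('q, 'a, 'k) twa \<Rightarrow> 'a ext \<Rightarrow> bool \<Rightarrow> bool \<Rightarrow> 'q \<Rightarrow> 'q \<Rightarrow> 'q crossing \<Rightarrow> 'q crossing \<Rightarrow> bool" where
  "position_consistent M a first ends p0 pe L R \<longleftrightarrow>
     (if first then visits M a ends pe p0 L R else waiting_left M a ends pe L R)"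

lemma resumable_start_iff:
  "resumable M w pe p0 1 X \<longleftrightarrow>
     (\<forall>b. b < 0 \<or> int (length w) < b \<longrightarrow> X b = []) \<and> waiting_right M LMark False pe [] (X 0) \<and>
     (\<forall>j\<in>{1..int (length w) + 1}.
        position_consistent M (letter_at w j) (j = 1) (j = int (length w) + 1) p0 pe (X (j - 1)) (X j))"
proof -
  have "{1..int (length w) + 1} = insert 1 {1<..int (length w) + 1}" by auto
  moreover have "{0..<1::int} = {0}" by auto
  ultimately show ?thesis
    by (auto simp: resumable_def Let_def position_consistent_def)
qed

text \<open>
  The state reached after \<open>j\<close> letters: the initial and final state of the guessed computation,
  whether \<open>j = 0\<close>, and its crossing sequence at boundary \<open>j\<close>. Reading letter \<open>j + 1\<close> checks
  local consistency at position \<open>j + 1\<close> and multiplies by the weight of the steps leaving it.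
\<close>

datatype 'q view = View (view_start: 'q) (view_end: 'q) (view_first: bool) (view_crossing: "'q crossing")

definition view_states :: "('q, 'a, 'k) twa \<Rightarrow> 'q view set" where
  "view_states M = {View p0 pe first X | p0 pe first X.
     p0 \<in> tw_states M \<and> pe \<in> tw_states M \<and> set X \<subseteq> tw_states M \<times> tw_states M \<times> UNIV \<and>
     length X \<le> 2 * card (tw_states M)}"

lemma UNIV_dir: "(UNIV :: dir set) = {Back, Fwd}"
  using dir.exhaust by auto

lemma finite_view_states:
  assumes "finite (tw_states M)"
  shows "finite (view_states M)"
proof -
  let ?Q = "tw_states M"
  let ?Xs = "{X. set X \<subseteq> ?Q \<times> ?Q \<times> (UNIV :: dir set) \<and> length X \<le> 2 * card ?Q}"
  have "view_states M \<subseteq> (\<lambda>(p0, pe, first, X). View p0 pe first X) ` (?Q \<times> ?Q \<times> UNIV \<times> ?Xs)"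
    by (fastforce simp: view_states_def image_iff)
  moreover have "finite ?Xs"
    using assms by (intro finite_lists_length_le) (simp add: UNIV_dir)
  then have "finite (?Q \<times> ?Q \<times> (UNIV :: bool set) \<times> ?Xs)" using assms by simp
  ultimately show ?thesis by (rule finite_subset[OF _ finite_imageI])
qed

definition crossing_automaton :: "'a set \<Rightarrow> ('q, 'a, 'k::comm_semiring_1) twa \<Rightarrow> ('q view, 'a, 'k) owa" where
  "crossing_automaton A M = \<lparr>
     ow_states = view_states M,
     ow_init = (\<lambda>v.
       if v \<in> view_states M \<and> view_first v \<and> tw_init M (view_start v) \<noteq> None \<and>
          waiting_right M LMark False (view_end v) [] (view_crossing v)
       then Some (the (tw_init M (view_start v)) * position_weight M LMark [] (view_crossing v))
       else None),
     ow_final = (\<lambda>v.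
       if v \<in> view_states M \<and> tw_final M (view_end v) \<noteq> None \<and>
          position_consistent M RMark (view_first v) True (view_start v) (view_end v) (view_crossing v) []
       then Some (position_weight M RMark (view_crossing v) [] * the (tw_final M (view_end v)))
       else None),
     ow_trans = (\<lambda>v a v'.
       if v \<in> view_states M \<and> v' \<in> view_states M \<and> a \<in> A \<and>
          view_start v' = view_start v \<and> view_end v' = view_end v \<and> \<not> view_first v' \<and>
          position_consistent M (Sym a) (view_first v) False (view_start v) (view_end v)
            (view_crossing v) (view_crossing v')
       then Some (position_weight M (Sym a) (view_crossing v) (view_crossing v'))
       else None) \<rparr>"

lemma owa_wf_crossing_automaton: "twa_wf A M \<Longrightarrow> owa_wf A (crossing_automaton A M)"
  by (auto simp: owa_wf_def crossing_automaton_def twa_wf_def finite_view_states split: if_splits)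

definition views :: "'a list \<Rightarrow> 'q \<Rightarrow> 'q \<Rightarrow> (int \<Rightarrow> 'q crossing) \<Rightarrow> 'q view list" where
  "views w p0 pe X = map (\<lambda>j. View p0 pe (j = 0) (X (int j))) [0..<length w + 1]"

lemma length_views [simp]: "length (views w p0 pe X) = length w + 1"
  by (simp add: views_def)

lemma nth_views [simp]: "j \<le> length w \<Longrightarrow> views w p0 pe X ! j = View p0 pe (j = 0) (X (int j))"
  by (simp add: views_def less_Suc_eq_le del: upt_Suc)

lemma views_in_ow_comps:
  assumes res: "resumable M w pe p0 1 X" and "tw_init M p0 \<noteq> None" "tw_final M pe \<noteq> None"
    and "w \<in> lists A" and "\<forall>j\<le>length w. View p0 pe (j = 0) (X (int j)) \<in> view_states M"
  shows "views w p0 pe X \<in> ow_comps (crossing_automaton A M) w"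
proof -
  have out: "\<And>b. b < 0 \<or> int (length w) < b \<Longrightarrow> X b = []"
    and start: "waiting_right M LMark False pe [] (X 0)"
    and pos: "\<And>j. j \<in> {1..int (length w) + 1} \<Longrightarrow>
      position_consistent M (letter_at w j) (j = 1) (j = int (length w) + 1) p0 pe (X (j - 1)) (X j)"
    using res unfolding resumable_start_iff by blast+
  have "position_consistent M RMark (length w = 0) True p0 pe (X (int (length w))) []"
    using pos[of "int (length w) + 1"] out[of "int (length w) + 1"] by simp
  moreover have "position_consistent M (Sym (w ! j)) (j = 0) False p0 pe (X (int j)) (X (int (Suc j)))"
    if "j < length w" for j
    using that pos[of "1 + int j"] by (simp add: letter_at_Suc)
  moreover have "View p0 pe False (X (1 + int j)) \<in> view_states M" if "j < length w" for j
    using that assms(5)[rule_format, of "Suc j"] by simp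
  ultimately show ?thesis
    using assms start by (auto simp: ow_comps_def crossing_automaton_def in_lists_conv_set)
qed

lemma ow_comps_crossing_automaton_nth:
  assumes qs: "qs \<in> ow_comps (crossing_automaton A M) w" and j: "j \<le> length w"
  shows "qs ! j = View (view_start (qs ! 0)) (view_end (qs ! 0)) (j = 0) (view_crossing (qs ! j))"
proof -
  have "view_start (qs ! j) = view_start (qs ! 0) \<and> view_end (qs ! j) = view_end (qs ! 0) \<and>
      view_first (qs ! j) = (j = 0)"
    using j
  proof (induction j)
    case 0
    then show ?case using qs by (auto simp: ow_comps_def crossing_automaton_def split: if_splits)
  next
    case (Suc j)
    then have "ow_trans (crossing_automaton A M) (qs ! j) (w ! j) (qs ! Suc j) \<noteq> None"
      using qs by (simp add: ow_comps_def)
    then show ?case using Suc by (auto simp: crossing_automaton_def split: if_splits)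
  qed
  then show ?thesis by (cases "qs ! j") auto
qed

lemma crossing_automaton_runE:
  assumes qs: "qs \<in> ow_comps (crossing_automaton A M) w"
  obtains p0 pe X where "qs = views w p0 pe X" "resumable M w pe p0 1 X"
    "tw_init M p0 \<noteq> None" "tw_final M pe \<noteq> None"
proof -
  let ?n = "length w"
  define p0 where "p0 = view_start (qs ! 0)"
  define pe where "pe = view_end (qs ! 0)"
  define X where "X b = (if 0 \<le> b \<and> b \<le> int ?n then view_crossing (qs ! nat b) else [])" for b
  have len: "length qs = ?n + 1"
    and init: "ow_init (crossing_automaton A M) (qs ! 0) \<noteq> None"
    and final: "ow_final (crossing_automaton A M) (qs ! ?n) \<noteq> None"
    and trans: "\<And>j. j < ?n \<Longrightarrow> ow_trans (crossing_automaton A M) (qs ! j) (w ! j) (qs ! Suc j) \<noteq> None"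
    using qs by (auto simp: ow_comps_def)
  have shape: "qs ! j = View p0 pe (j = 0) (X (int j))" if "j \<le> ?n" for j
  proof -
    have "X (int j) = view_crossing (qs ! j)" using that by (simp add: X_def)
    then show ?thesis using ow_comps_crossing_automaton_nth[OF qs that] by (simp only: p0_def pe_def)
  qed
  have "qs = views w p0 pe X"
    using len shape by (intro nth_equalityI) auto
  moreover have "position_consistent M (letter_at w j) (j = 1) (j = int ?n + 1) p0 pe (X (j - 1)) (X j)"
    if "j \<in> {1..int ?n + 1}" for j
  proof -
    define k where "k = nat (j - 1)"
    have k: "j = 1 + int k" "k \<le> ?n" using that by (auto simp: k_def)
    show ?thesis
    proof (cases "k = ?n")
      case True
      moreover have "X (1 + int ?n) = []" by (simp add: X_def)
      ultimately show ?thesis using final shape[of ?n] k by (auto simp: crossing_automaton_def split: if_splits)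
    next
      case False
      then show ?thesis using trans[of k] shape[of k] shape[of "Suc k"] k
        by (auto simp: crossing_automaton_def letter_at_Suc split: if_splits)
    qed
  qed
  moreover have "waiting_right M LMark False pe [] (X 0)" "tw_init M p0 \<noteq> None"
    using init shape[of 0] by (auto simp: crossing_automaton_def split: if_splits)
  moreover have "tw_final M pe \<noteq> None"
    using final shape[of ?n] by (auto simp: crossing_automaton_def split: if_splits)
  moreover have "X b = []" if "b < 0 \<or> int ?n < b" for b
    using that by (auto simp: X_def)
  ultimately show thesis
    using that by (simp add: resumable_start_iff)
qed

lemma ow_comp_weight_views:
  assumes run: "views w p0 pe X \<in> ow_comps (crossing_automaton A M) w"
    and out: "X (-1) = []" "X (int (length w) + 1) = []"
  shows "ow_comp_weight (crossing_automaton A M) w (views w p0 pe X) =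
           the (tw_init M p0) *
           (\<Prod>i\<le>Suc (length w). position_weight M (letter_at w (int i)) (X (int i - 1)) (X (int i))) *
           the (tw_final M pe)"
proof -
  let ?n = "length w" and ?N = "crossing_automaton A M" and ?vs = "views w p0 pe X"
  let ?f = "\<lambda>i. position_weight M (letter_at w (int i)) (X (int i - 1)) (X (int i))"
  have "the (ow_init ?N (?vs ! 0)) = the (tw_init M p0) * ?f 0"
    using run out by (auto simp: ow_comps_def crossing_automaton_def split: if_splits)
  moreover have "the (ow_final ?N (?vs ! ?n)) = ?f (Suc ?n) * the (tw_final M pe)"
    using run out by (auto simp: ow_comps_def crossing_automaton_def add.commute split: if_splits)
  moreover have "the (ow_trans ?N (?vs ! j) (w ! j) (?vs ! (j + 1))) = ?f (Suc j)" if "j < ?n" for j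
    using run that by (auto simp: ow_comps_def crossing_automaton_def letter_at_Suc split: if_splits)
  then have "prod_list (map (\<lambda>j. the (ow_trans ?N (?vs ! j) (w ! j) (?vs ! (j + 1)))) [0..<?n]) =
      (\<Prod>j<?n. ?f (Suc j))"
    by (simp add: prod.list_conv_set_nth atLeast0LessThan)
  moreover have "(\<Prod>i\<le>Suc ?n. ?f i) = ?f 0 * (\<Prod>i<Suc ?n. ?f (Suc i))"
    by (rule prod.atMost_shift)
  ultimately show ?thesis by (simp only: ow_comp_weight_def prod.lessThan_Suc length_views mult_ac)
qed

definition crossing_views :: "'a list \<Rightarrow> ('q \<times> int) list \<Rightarrow> 'q view list" where
  "crossing_views w cs = views w (fst (hd cs)) (fst (last cs)) (crossing_seq cs)"

lemma crossing_views_in_ow_comps: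
  assumes wf: "twa_wf A M" and unamb: "twa_unambiguous M" and cs: "cs \<in> tw_comps M w" and "w \<in> lists A"
  shows "crossing_views w cs \<in> ow_comps (crossing_automaton A M) w"
  unfolding crossing_views_def
proof (rule views_in_ow_comps)
  note C = cs[unfolded tw_comps_iff]
  show "resumable M w (fst (last cs)) (fst (hd cs)) 1 (crossing_seq cs)"
    using cs by (rule resumable_crossing_seq)
  show "tw_init M (fst (hd cs)) \<noteq> None" "tw_final M (fst (last cs)) \<noteq> None" "w \<in> lists A"
    using C assms(4) by simp_all
  have "fst (hd cs) \<in> tw_states M" "fst (last cs) \<in> tw_states M"
    using tw_comps_states[OF wf cs] C by simp_all
  then show "\<forall>j\<le>length w. View (fst (hd cs)) (fst (last cs)) (j = 0) (crossing_seq cs (int j)) \<in> view_states M"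
    using crossing_seq_states[OF wf] length_crossing_seq_bound[OF unamb wf cs] C
    by (auto simp: view_states_def)
qed

lemma ow_comps_crossing_automaton_subset:
  "ow_comps (crossing_automaton A M) w \<subseteq> crossing_views w ` tw_comps M w"
proof
  fix qs assume "qs \<in> ow_comps (crossing_automaton A M) w"
  then obtain p0 pe X where qs: "qs = views w p0 pe X" and X: "resumable M w pe p0 1 X"
      "tw_init M p0 \<noteq> None" "tw_final M pe \<noteq> None"
    by (rule crossing_automaton_runE)
  from X obtain cs where "cs \<in> tw_comps M w" "fst (hd cs) = p0" "fst (last cs) = pe" "crossing_seq cs = X"
    by (rule tw_comp_of_resumable)
  then show "qs \<in> crossing_views w ` tw_comps M w"
    using qs unfolding crossing_views_def by blast
qed

lemma owa_unambiguous_crossing_automaton: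
  assumes "twa_unambiguous M"
  shows "owa_unambiguous (crossing_automaton A M)"
  using assms ow_comps_crossing_automaton_subset[of A M]
  unfolding owa_unambiguous_def twa_unambiguous_def by blast

lemma ow_weight_crossing_automaton:
  assumes wf: "twa_wf A M" and unamb: "twa_unambiguous M" and w: "w \<in> lists A"
  shows "ow_weight (crossing_automaton A M) w = tw_weight M w"
proof (cases "tw_comps M w = {}")
  case True
  then show ?thesis
    using ow_comps_crossing_automaton_subset[of A M w] by (simp add: ow_weight_def tw_weight_def)
next
  case False
  then obtain cs where cs: "cs \<in> tw_comps M w" by blast
  then have comps: "tw_comps M w = {cs}" using unamb by (auto simp: twa_unambiguous_def)
  then have "ow_comps (crossing_automaton A M) w = {crossing_views w cs}"
    using ow_comps_crossing_automaton_subset[of A M w] crossing_views_in_ow_comps[OF wf unamb cs w] by auto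
  moreover have "crossing_seq cs (-1) = []" "crossing_seq cs (int (length w) + 1) = []"
    using resumableD(6)[OF resumable_crossing_seq[OF cs]] by simp_all
  ultimately show ?thesis
    using ow_comp_weight_views[OF crossing_views_in_ow_comps[OF wf unamb cs w, unfolded crossing_views_def]]
      tw_comp_weight_crossing_seq[OF cs] comps
    by (simp add: ow_weight_def tw_weight_def crossing_views_def)
qed

subsection \<open>Renaming states\<close>

lemma ow_comps_subset_states:
  assumes wf: "owa_wf A N" and qs: "qs \<in> ow_comps N w"
  shows "set qs \<subseteq> ow_states N"
proof
  fix q assume "q \<in> set qs"
  then obtain j where j: "j < length qs" "q = qs ! j" by (auto simp: in_set_conv_nth)
  have "ow_trans N (qs ! j) (w ! j) (qs ! (j + 1)) \<noteq> None \<or> ow_final N (qs ! j) \<noteq> None"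
  proof (cases "j < length w")
    case False
    then have "j = length w" using qs j by (simp add: ow_comps_def)
    then show ?thesis using qs by (simp add: ow_comps_def)
  qed (use qs in \<open>simp add: ow_comps_def\<close>)
  then show "q \<in> ow_states N" using wf j unfolding owa_wf_def by blast
qed

definition rename_owa :: "('p \<Rightarrow> 'r) \<Rightarrow> ('p, 'a, 'k) owa \<Rightarrow> ('r, 'a, 'k) owa" where
  "rename_owa f N = (let g = inv_into (ow_states N) f; S = f ` ow_states N in \<lparr>
     ow_states = S,
     ow_init = (\<lambda>r. if r \<in> S then ow_init N (g r) else None),
     ow_final = (\<lambda>r. if r \<in> S then ow_final N (g r) else None),
     ow_trans = (\<lambda>r a r'. if r \<in> S \<and> r' \<in> S then ow_trans N (g r) a (g r') else None) \<rparr>)"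

context
  fixes f :: "'p \<Rightarrow> 'r" and N :: "('p, 'a, 'k::comm_semiring_1) owa" and A :: "'a set"
  assumes inj: "inj_on f (ow_states N)" and wf: "owa_wf A N"
begin

lemma owa_wf_rename: "owa_wf A (rename_owa f N)"
  using wf by (auto simp: owa_wf_def rename_owa_def Let_def split: if_splits)

lemma ow_comps_rename: "ow_comps (rename_owa f N) w = map f ` ow_comps N w"
proof
  let ?g = "inv_into (ow_states N) f"
  show "map f ` ow_comps N w \<subseteq> ow_comps (rename_owa f N) w"
  proof clarify
    fix qs assume qs: "qs \<in> ow_comps N w"
    have "\<forall>q\<in>set qs. ?g (f q) = q \<and> f q \<in> f ` ow_states N"
      using ow_comps_subset_states[OF wf qs] inj by auto
    then show "map f qs \<in> ow_comps (rename_owa f N) w"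
      using qs by (auto simp: ow_comps_def rename_owa_def Let_def)
  qed
  show "ow_comps (rename_owa f N) w \<subseteq> map f ` ow_comps N w"
  proof
    fix qs assume qs: "qs \<in> ow_comps (rename_owa f N) w"
    then have S: "set qs \<subseteq> f ` ow_states N"
      using ow_comps_subset_states[OF owa_wf_rename qs] by (simp add: rename_owa_def Let_def)
    then have "map ?g qs \<in> ow_comps N w"
      using qs by (auto simp: ow_comps_def rename_owa_def Let_def split: if_splits)
    moreover have "map f (map ?g qs) = qs"
      unfolding map_map by (rule map_idI) (use S in \<open>auto simp: f_inv_into_f\<close>)
    ultimately show "qs \<in> map f ` ow_comps N w" by (metis image_eqI)
  qed
qed

lemma ow_comp_weight_rename:
  assumes qs: "qs \<in> ow_comps N w"
  shows "ow_comp_weight (rename_owa f N) w (map f qs) = ow_comp_weight N w qs"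
proof -
  let ?R = "rename_owa f N"
  have len: "length qs = length w + 1" using qs by (simp add: ow_comps_def)
  have state: "inv_into (ow_states N) f (map f qs ! j) = qs ! j \<and> map f qs ! j \<in> f ` ow_states N"
    if "j \<le> length w" for j
  proof -
    have "qs ! j \<in> ow_states N"
      using ow_comps_subset_states[OF wf qs] nth_mem[of j qs] that len by auto
    then show ?thesis using inj that len by simp
  qed
  have trans: "map (\<lambda>j. the (ow_trans ?R (map f qs ! j) (w ! j) (map f qs ! (j + 1)))) [0..<length w] =
        map (\<lambda>j. the (ow_trans N (qs ! j) (w ! j) (qs ! (j + 1)))) [0..<length w]"
  proof (rule map_cong[OF refl])
    fix j assume "j \<in> set [0..<length w]"
    then show "the (ow_trans ?R (map f qs ! j) (w ! j) (map f qs ! (j + 1))) =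
        the (ow_trans N (qs ! j) (w ! j) (qs ! (j + 1)))"
      using state[of j] state[of "j + 1"] by (simp add: rename_owa_def Let_def)
  qed
  moreover have "ow_init ?R (map f qs ! 0) = ow_init N (qs ! 0)"
    "ow_final ?R (map f qs ! length w) = ow_final N (qs ! length w)"
    using state[of 0] state[of "length w"] by (simp_all add: rename_owa_def Let_def)
  ultimately show ?thesis by (simp only: ow_comp_weight_def)
qed

lemma owa_unambiguous_rename: "owa_unambiguous N \<Longrightarrow> owa_unambiguous (rename_owa f N)"
  unfolding owa_unambiguous_def ow_comps_rename by blast

lemma ow_weight_rename: "ow_weight (rename_owa f N) w = ow_weight N w"
proof -
  have "inj_on (map f) (ow_comps N w)"
  proof (rule inj_onI)
    fix qs qs' assume "qs \<in> ow_comps N w" "qs' \<in> ow_comps N w" "map f qs = map f qs'"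
    moreover from this have "inj_on f (set qs \<union> set qs')"
      using ow_comps_subset_states[OF wf] inj by (meson Un_least inj_on_subset)
    ultimately show "qs = qs'" by (simp add: inj_on_map_eq_map)
  qed
  then show ?thesis
    by (simp add: ow_weight_def ow_comps_rename sum.reindex ow_comp_weight_rename)
qed

end

theorem mainTheorem4:
  fixes A :: "'a set" and M :: "('q, 'a, 'k::comm_semiring_1) twa"
  assumes "twa_wf A M" and "twa_unambiguous M"
  shows "\<exists>N :: (nat, 'a, 'k) owa. owa_wf A N \<and> owa_unambiguous N \<and>
           (\<forall>w \<in> lists A. ow_weight N w = tw_weight M w)"
proof -
  let ?C = "crossing_automaton A M"
  have wf: "owa_wf A ?C" using assms(1) by (rule owa_wf_crossing_automaton)
  then have "finite (ow_states ?C)" by (simp add: owa_wf_def)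
  then obtain f :: "'q view \<Rightarrow> nat" where inj: "inj_on f (ow_states ?C)"
    using finite_imp_inj_to_nat_seg by blast
  show ?thesis
  proof (intro exI[of _ "rename_owa f ?C"] conjI ballI)
    show "owa_wf A (rename_owa f ?C)" using inj wf by (rule owa_wf_rename)
    show "owa_unambiguous (rename_owa f ?C)"
      using owa_unambiguous_rename[OF inj wf] owa_unambiguous_crossing_automaton[OF assms(2)] .
    show "ow_weight (rename_owa f ?C) w = tw_weight M w" if "w \<in> lists A" for w
      using ow_weight_rename[OF inj wf] ow_weight_crossing_automaton[OF assms that] by simp
  qed
qed

end
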